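(* Let $V,W$ be finite-dimensional real vector spaces and let $A(\xi):V\to W$ be a homogeneous symbol on $\mathbb{R}^d$ (matrix entries homogeneous polynomials of a common degree with real coefficients). Denote by $A(\xi)_{\mathbb C}:V_{\mathbb C}\to W_{\mathbb C}$ its complexification, regarded as a polynomial in complex variables $\xi\in\mathbb{C}^d$. The following are equivalent: (1) $\operatorname{rank}_{\mathbb C}A(\xi)_{\mathbb C}$ is constant on $\mathbb{C}^d\setminus\{0\}$; (2) there exist finite-dimensional real vector spaces $U,X$ and homogeneous symbols $B(\xi):U\to V$, $Q(\xi):W\to X$ on $\mathbb{R}^d$ with real coefficients, forming a symbol complex $U\xrightarrow{B(\xi)}V\xrightarrow{A(\xi)}W\xrightarrow{Q(\xi)}X$, such that $$\operatorname{im}B(\xi)_{\mathbb C}=\ker A(\xi)_{\mathbb C}\quad\text{and}\quad \operatorname{im}A(\xi)_{\mathbb C}=\ker Q(\xi)_{\mathbb C}\qquad\text{for all }\xi\in\mathbb{C}^d\setminus\{0\}.$$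
   Context: For a real vector space $V$, $V_{\mathbb C}=\mathbb{C}\otimes_{\mathbb R}V=V\oplus iV$; for a real linear map $f:V\to W$, $f_{\mathbb C}(v_1+iv_2)=f(v_1)+if(v_2)$. The complexification of a symbol $A(\xi)$ on $\mathbb{R}^d$ is $A(\xi)_{\mathbb C}$, with the polynomial entries evaluated at complex $\xi$. *)

theory Defs
  imports Complex_Main "Jordan_Normal_Form.DL_Rank" "Jordan_Normal_Form.Matrix_Kernel"
begin

definition hmonos :: "nat \<Rightarrow> ('d::finite \<Rightarrow> nat) set" where
  "hmonos k = {\<alpha>. sum \<alpha> UNIV = k}"

definition hpoly_eval :: "nat \<Rightarrow> (('d::finite \<Rightarrow> nat) \<Rightarrow> real) \<Rightarrow> ('d \<Rightarrow> complex) \<Rightarrow> complex" where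
  "hpoly_eval k c \<xi> = (\<Sum>\<alpha>\<in>hmonos k. complex_of_real (c \<alpha>) * (\<Prod>l\<in>UNIV. \<xi> l ^ \<alpha> l))"

text \<open>Complexified homogeneous symbol R^n -> R^m (w.r.t. bases): the m x n complex matrix whose
  (i,j) entry is the degree-k homogeneous real polynomial with coefficients C i j, evaluated at xi in C^d.\<close>
definition symbolC :: "nat \<Rightarrow> nat \<Rightarrow> nat \<Rightarrow> (nat \<Rightarrow> nat \<Rightarrow> ('d::finite \<Rightarrow> nat) \<Rightarrow> real)
    \<Rightarrow> ('d \<Rightarrow> complex) \<Rightarrow> complex mat" where
  "symbolC m n k C \<xi> = mat m n (\<lambda>(i,j). hpoly_eval k (C i j) \<xi>)"

definition mat_image :: "'a::comm_ring_1 mat \<Rightarrow> 'a vec set" where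
  "mat_image M = {M *\<^sub>v v | v. v \<in> carrier_vec (dim_col M)}"

definition crank :: "complex mat \<Rightarrow> nat" where
  "crank M = vec_space.rank (dim_row M) M"

end

theory Submission
  imports Defs
begin

text \<open>
  If \<open>A(\<xi>)\<close> has rank \<open>r\<close> on \<open>\<complex>\<^sup>d - {0}\<close>, all its \<open>(r+1)\<close>-minors vanish identically (at \<open>\<xi> = 0\<close> by
  homogeneity). Expanding such a minor along a free row shows that the vector of cofactors of an
  \<open>(r+1)\<close>-column submatrix lies in \<open>ker A(\<xi>)\<close>; its entries are homogeneous of degree \<open>r k\<close>, and
  wherever an \<open>r\<close>-minor is nonzero these vectors span the kernel (Cramer's rule). Taking all of
  them as the columns of \<open>B\<close> gives \<open>im B(\<xi>) = ker A(\<xi>)\<close>; the same construction for the transpose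
  gives \<open>Q\<close> with \<open>im Q(\<xi>)\<^sup>T = ker A(\<xi>)\<^sup>T\<close>, and \<open>im A(\<xi>) = ker Q(\<xi>)\<close> follows by duality.
  Conversely, exactness at \<open>V\<close> gives \<open>rank B(\<xi>) + rank A(\<xi>) = dim V\<close>; both ranks are lower
  semicontinuous, hence locally constant, and \<open>\<complex>\<^sup>d - {0}\<close> is connected by segments.
\<close>

section \<open>Homogeneous polynomial functions\<close>

lemma finite_hmonos: "finite (hmonos k :: ('d::finite \<Rightarrow> nat) set)"
proof (rule finite_subset)
  show "hmonos k \<subseteq> (UNIV::'d set) \<rightarrow>\<^sub>E {..k}"
  proof
    fix \<alpha> :: "'d \<Rightarrow> nat" assume "\<alpha> \<in> hmonos k"
    then have "sum \<alpha> UNIV = k" by (simp add: hmonos_def)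
    then have "\<alpha> l \<le> k" for l by (metis finite UNIV_I member_le_sum zero_le)
    then show "\<alpha> \<in> UNIV \<rightarrow>\<^sub>E {..k}" by auto
  qed
qed (auto intro: finite_PiE)

definition hpolys :: "nat \<Rightarrow> (('d::finite \<Rightarrow> complex) \<Rightarrow> complex) set" where
  "hpolys k = range (hpoly_eval k)"

lemma hpolysI: "(\<And>\<xi>. F \<xi> = hpoly_eval k c \<xi>) \<Longrightarrow> F \<in> hpolys k"
  using ext[of F "hpoly_eval k c"] unfolding hpolys_def by auto

lemma hpolysE:
  assumes "F \<in> hpolys k"
  obtains c where "\<And>\<xi>. F \<xi> = hpoly_eval k c \<xi>"
  using assms that unfolding hpolys_def by auto

lemma hpolys_zero: "(\<lambda>_. 0) \<in> hpolys k"
  by (rule hpolysI[of _ _ "\<lambda>_. 0"]) (simp add: hpoly_eval_def)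

lemma hpolys_add:
  assumes "F \<in> hpolys k" "G \<in> hpolys k"
  shows "(\<lambda>\<xi>. F \<xi> + G \<xi>) \<in> hpolys k"
proof -
  obtain c d where "\<And>\<xi>. F \<xi> = hpoly_eval k c \<xi>" "\<And>\<xi>. G \<xi> = hpoly_eval k d \<xi>"
    using assms by (meson hpolysE)
  then show ?thesis
    by (intro hpolysI[of _ _ "\<lambda>\<alpha>. c \<alpha> + d \<alpha>"]) (simp add: hpoly_eval_def sum.distrib algebra_simps)
qed

lemma hpolys_scale:
  assumes "F \<in> hpolys k"
  shows "(\<lambda>\<xi>. complex_of_real r * F \<xi>) \<in> hpolys k"
proof -
  obtain c where "\<And>\<xi>. F \<xi> = hpoly_eval k c \<xi>"
    using assms by (meson hpolysE)
  then show ?thesis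
    by (intro hpolysI[of _ _ "\<lambda>\<alpha>. r * c \<alpha>"]) (simp add: hpoly_eval_def sum_distrib_left algebra_simps)
qed

lemma hmonos_0: "hmonos 0 = {\<lambda>_. 0}"
  by (auto simp: hmonos_def)

lemma hpoly_eval_degree_0: "hpoly_eval 0 c \<xi> = complex_of_real (c (\<lambda>_. 0))"
  by (simp add: hpoly_eval_def hmonos_0)

lemma hpolys_one: "(\<lambda>_. 1) \<in> hpolys 0"
  by (rule hpolysI[of _ _ "\<lambda>_. 1"]) (simp add: hpoly_eval_degree_0)

lemma hpolys_mult:
  fixes F G :: "('d::finite \<Rightarrow> complex) \<Rightarrow> complex"
  assumes "F \<in> hpolys a" "G \<in> hpolys b"
  shows "(\<lambda>\<xi>. F \<xi> * G \<xi>) \<in> hpolys (a + b)"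
proof -
  obtain c d where c: "\<And>\<xi>. F \<xi> = hpoly_eval a c \<xi>" and d: "\<And>\<xi>. G \<xi> = hpoly_eval b d \<xi>"
    using assms by (meson hpolysE)
  define S :: "(('d \<Rightarrow> nat) \<times> ('d \<Rightarrow> nat)) set" where "S = hmonos a \<times> hmonos b"
  define plus :: "('d \<Rightarrow> nat) \<times> ('d \<Rightarrow> nat) \<Rightarrow> 'd \<Rightarrow> nat"
    where "plus = (\<lambda>(\<alpha>, \<beta>) l. \<alpha> l + \<beta> l)"
  define e where "e \<gamma> = (\<Sum>p\<in>{p \<in> S. plus p = \<gamma>}. c (fst p) * d (snd p))" for \<gamma>
  have plus_hmonos: "plus ` S \<subseteq> hmonos (a + b)"
    by (auto simp: S_def plus_def hmonos_def sum.distrib)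
  show ?thesis
  proof (rule hpolysI[of _ _ e])
    fix \<xi> :: "'d \<Rightarrow> complex"
    let ?m = "\<lambda>\<gamma>. \<Prod>l\<in>UNIV. \<xi> l ^ \<gamma> l"
    let ?h = "\<lambda>p. complex_of_real (c (fst p) * d (snd p)) * ?m (plus p)"
    have "F \<xi> * G \<xi> = (\<Sum>\<alpha>\<in>hmonos a. \<Sum>\<beta>\<in>hmonos b.
        (complex_of_real (c \<alpha>) * ?m \<alpha>) * (complex_of_real (d \<beta>) * ?m \<beta>))"
      by (simp add: c d hpoly_eval_def sum_product)
    also have "\<dots> = (\<Sum>\<alpha>\<in>hmonos a. \<Sum>\<beta>\<in>hmonos b. ?h (\<alpha>, \<beta>))"
      by (simp add: plus_def power_add prod.distrib algebra_simps)
    also have "\<dots> = sum ?h S"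
      unfolding S_def by (simp add: sum.cartesian_product split_def)
    also have "\<dots> = (\<Sum>\<gamma>\<in>hmonos (a + b). sum ?h {p \<in> S. plus p = \<gamma>})"
      by (rule sum.group[symmetric, OF _ finite_hmonos plus_hmonos]) (simp add: S_def finite_hmonos)
    also have "\<dots> = hpoly_eval (a + b) e \<xi>"
      unfolding hpoly_eval_def e_def
      by (intro sum.cong refl) (simp add: sum_distrib_right)
    finally show "F \<xi> * G \<xi> = hpoly_eval (a + b) e \<xi>" .
  qed
qed

lemma hpolys_sum:
  assumes "finite S" "\<And>i. i \<in> S \<Longrightarrow> F i \<in> hpolys k"
  shows "(\<lambda>\<xi>. \<Sum>i\<in>S. F i \<xi>) \<in> hpolys k"
  using assms by (induction S rule: finite_induct) (auto intro: hpolys_zero hpolys_add)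

lemma hpolys_prod:
  assumes "\<And>i. i < r \<Longrightarrow> F i \<in> hpolys k"
  shows "(\<lambda>\<xi>. \<Prod>i<r. F i \<xi>) \<in> hpolys (r * k)"
  using assms
proof (induction r)
  case 0
  then show ?case using hpolys_one by simp
next
  case (Suc r)
  have "(\<lambda>\<xi>. (\<Prod>i<r. F i \<xi>) * F r \<xi>) \<in> hpolys (r * k + k)"
    using Suc by (intro hpolys_mult) auto
  then show ?case by (simp add: add.commute)
qed

lemma hpolys_det:
  assumes "\<And>\<xi>. M \<xi> \<in> carrier_mat r r"
    and "\<And>i j. i < r \<Longrightarrow> j < r \<Longrightarrow> (\<lambda>\<xi>. M \<xi> $$ (i, j)) \<in> hpolys k"
  shows "(\<lambda>\<xi>. det (M \<xi>)) \<in> hpolys (r * k)"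
proof -
  have "det (M \<xi>) = (\<Sum>p\<in>{p. p permutes {..<r}}.
      complex_of_real (of_int (sign p)) * (\<Prod>i<r. M \<xi> $$ (i, p i)))" for \<xi>
    using assms(1)[of \<xi>] unfolding det_def by (simp add: atLeast0LessThan)
  moreover have "(\<lambda>\<xi>. \<Sum>p\<in>{p. p permutes {..<r}}.
      complex_of_real (of_int (sign p)) * (\<Prod>i<r. M \<xi> $$ (i, p i))) \<in> hpolys (r * k)"
  proof (intro hpolys_sum hpolys_scale hpolys_prod)
    fix p i assume "p \<in> {p. p permutes {..<r}}" "i < r"
    then show "(\<lambda>\<xi>. M \<xi> $$ (i, p i)) \<in> hpolys k"
      using assms(2) permutes_in_image by fastforce
  qed (simp add: finite_permutations)
  ultimately show ?thesis by simp
qed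

lemma hpoly_eval_at_0:
  assumes "k > 0"
  shows "hpoly_eval k c (\<lambda>_::'d::finite. 0) = 0"
proof -
  have "(\<Prod>l\<in>UNIV. (0::complex) ^ \<alpha> l) = 0" if "\<alpha> \<in> hmonos k" for \<alpha> :: "'d::finite \<Rightarrow> nat"
  proof -
    have "sum \<alpha> UNIV = k" using that by (simp add: hmonos_def)
    then obtain l where "\<alpha> l \<noteq> 0" using assms by (metis sum.neutral neq0_conv)
    then show ?thesis by (intro prod_zero) auto
  qed
  then show ?thesis unfolding hpoly_eval_def by simp
qed

lemma continuous_hpoly_eval [continuous_intros]:
  assumes "\<And>l. continuous F (\<lambda>t. x t l)"
  shows "continuous F (\<lambda>t. hpoly_eval k c (x t))"
  unfolding hpoly_eval_def by (intro continuous_intros assms)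

section \<open>Minors and cofactor vectors\<close>

definition minor_mat :: "'a mat \<Rightarrow> nat \<Rightarrow> (nat \<Rightarrow> nat) \<Rightarrow> (nat \<Rightarrow> nat) \<Rightarrow> 'a mat" where
  "minor_mat M s f g = mat s s (\<lambda>(a, b). M $$ (f a, g b))"

lemma minor_mat_carrier [simp]: "minor_mat M s f g \<in> carrier_mat s s"
  and minor_mat_dim [simp]: "dim_row (minor_mat M s f g) = s" "dim_col (minor_mat M s f g) = s"
  by (simp_all add: minor_mat_def)

lemma minor_mat_index [simp]: "a < s \<Longrightarrow> b < s \<Longrightarrow> minor_mat M s f g $$ (a, b) = M $$ (f a, g b)"
  by (simp add: minor_mat_def)

lemma det_minor_mat_0 [simp]: "det (minor_mat M 0 f g) = 1"
proof -
  have "minor_mat M 0 f g = 1\<^sub>m 0" by (rule eq_matI) auto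
  then show ?thesis by simp
qed

lemma det_minor_mat_transpose:
  assumes "M \<in> carrier_mat m n" "\<forall>a<s. f a < m" "\<forall>b<s. g b < n"
  shows "det (minor_mat (transpose_mat M) s g f) = det (minor_mat M s f g)"
proof -
  have "minor_mat (transpose_mat M) s g f = transpose_mat (minor_mat M s f g)"
    by (rule eq_matI) (use assms in auto)
  then show ?thesis by (metis det_transpose minor_mat_carrier)
qed

lemma minor_mat_cols_distinct:
  assumes M: "M \<in> carrier_mat m n" and f: "\<forall>a<s. f a < m" and g: "\<forall>b<s. g b < n"
    and det: "det (minor_mat M s f g) \<noteq> 0"
    and b: "b1 < s" "b2 < s" "col M (g b1) = col M (g b2)"
  shows "b1 = b2"
proof (rule ccontr)
  assume "b1 \<noteq> b2"
  have "col (minor_mat M s f g) b1 = col (minor_mat M s f g) b2"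
  proof (rule eq_vecI)
    fix a assume "a < dim_vec (col (minor_mat M s f g) b2)"
    then have a: "a < s" by simp
    have "M $$ (f a, g b1) = col M (g b1) $ f a" using M f g a b(1) by simp
    also have "\<dots> = col M (g b2) $ f a" using b(3) by simp
    also have "\<dots> = M $$ (f a, g b2)" using M f g a b(2) by simp
    finally show "col (minor_mat M s f g) b1 $ a = col (minor_mat M s f g) b2 $ a"
      using a b by simp
  qed simp
  then have "det (minor_mat M s f g) = 0"
    using det_identical_cols[OF minor_mat_carrier \<open>b1 \<noteq> b2\<close> b(1,2)] by blast
  with det show False by simp
qed

lemma minor_mat_inj_on:
  assumes M: "M \<in> carrier_mat m n" and f: "\<forall>a<s. f a < m" and g: "\<forall>b<s. g b < n"
    and det: "det (minor_mat M s f g) \<noteq> 0"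
  shows "inj_on g {..<s}" "inj_on f {..<s}"
proof -
  show "inj_on g {..<s}"
    using minor_mat_cols_distinct[OF M f g det] by (auto intro: inj_onI)
  have "det (minor_mat (transpose_mat M) s g f) \<noteq> 0"
    using det det_minor_mat_transpose[OF M f g] by simp
  then show "inj_on f {..<s}"
    using minor_mat_cols_distinct[of "transpose_mat M" n m s g f] M f g by (auto intro: inj_onI)
qed

lemma (in vec_space) minor_le_rank:
  assumes M: "M \<in> carrier_mat n nc" and f: "\<forall>a<s. f a < n" and g: "\<forall>b<s. g b < nc"
    and det: "det (minor_mat M s f g) \<noteq> 0"
  shows "s \<le> rank M"
proof -
  define C where "C = mat_of_cols n (map (\<lambda>b. col M (g b)) [0..<s])"
  have cols_C: "cols C = map (\<lambda>b. col M (g b)) [0..<s]"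
    unfolding C_def by (rule cols_mat_of_cols) (use M in auto)
  have C: "C \<in> carrier_mat n s"
    unfolding C_def using mat_of_cols_carrier(1)[of n "map (\<lambda>b. col M (g b)) [0..<s]"] by simp
  have distinct: "distinct (cols C)"
    unfolding cols_C distinct_conv_nth using minor_mat_cols_distinct[OF M f g det] by auto
  have "lin_indpt (set (cols C))"
  proof
    assume "lin_dep (set (cols C))"
    then obtain v where v: "v \<in> carrier_vec s" "v \<noteq> 0\<^sub>v s" "C *\<^sub>v v = 0\<^sub>v n"
      using lin_depE[OF C _ distinct] by blast
    have "minor_mat M s f g *\<^sub>v v = 0\<^sub>v s"
    proof (rule eq_vecI)
      fix a assume "a < dim_vec (0\<^sub>v s :: 'a vec)"
      then have a: "a < s" by simp
      have "(minor_mat M s f g *\<^sub>v v) $ a = (C *\<^sub>v v) $ f a"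
        using a v(1) f g M unfolding C_def mat_of_cols_def
        by (auto simp: scalar_prod_def intro!: sum.cong)
      then show "(minor_mat M s f g *\<^sub>v v) $ a = 0\<^sub>v s $ a" using v(3) f a by simp
    qed simp
    then have "det (minor_mat M s f g) = 0"
      using det_0_iff_vec_prod_zero_field[OF minor_mat_carrier] v by blast
    with det show False by simp
  qed
  moreover have "set (cols C) \<subseteq> set (cols M)"
    unfolding cols_C using M g by (auto simp: cols_def)
  ultimately have "card (set (cols C)) \<le> rank M"
    using rank_ge_card_indpt[OF M] by blast
  then show ?thesis using distinct_card[OF distinct] cols_C by simp
qed

lemma mult_mat_vec_scatter:
  assumes M: "M \<in> carrier_mat m n" and J: "finite J" and e: "\<And>j. j \<in> J \<Longrightarrow> e j < n" and i: "i < m"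
  shows "(M *\<^sub>v vec n (\<lambda>c. \<Sum>j\<in>J. if e j = c then y j else 0)) $ i = (\<Sum>j\<in>J. M $$ (i, e j) * y j)"
proof -
  have "(M *\<^sub>v vec n (\<lambda>c. \<Sum>j\<in>J. if e j = c then y j else 0)) $ i
      = (\<Sum>c<n. \<Sum>j\<in>J. if e j = c then M $$ (i, e j) * y j else 0)"
    using M i by (auto simp: scalar_prod_def atLeast0LessThan sum_distrib_left intro!: sum.cong)
  also have "\<dots> = (\<Sum>j\<in>J. \<Sum>c<n. if e j = c then M $$ (i, e j) * y j else 0)"
    by (rule sum.swap)
  also have "\<dots> = (\<Sum>j\<in>J. M $$ (i, e j) * y j)"
    using e by (auto intro!: sum.cong)
  finally show ?thesis .
qed

lemma sum_lessThan_supported_on_image: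
  fixes g :: "nat \<Rightarrow> nat"
  assumes g: "inj_on g {..<s}" "g ` {..<s} \<subseteq> {..<n}"
    and h: "\<And>c. c < n \<Longrightarrow> c \<notin> g ` {..<s} \<Longrightarrow> h c = 0"
  shows "(\<Sum>c<n. h c) = (\<Sum>b<s. h (g b))"
proof -
  have "(\<Sum>c<n. h c) = (\<Sum>c\<in>g ` {..<s}. h c)"
    by (rule sum.mono_neutral_right) (use g h in auto)
  also have "\<dots> = (\<Sum>b<s. h (g b))" by (rule sum.reindex[OF g(1), unfolded comp_def])
  finally show ?thesis .
qed

lemma sum_lessThan_supported_on_insert_image:
  fixes g :: "nat \<Rightarrow> nat"
  assumes g: "inj_on g {..<s}" "g ` {..<s} \<subseteq> {..<n}" and j: "j < n" "j \<notin> g ` {..<s}"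
    and h: "\<And>c. c < n \<Longrightarrow> c \<notin> g ` {..<s} \<Longrightarrow> c \<noteq> j \<Longrightarrow> h c = 0"
  shows "(\<Sum>c<n. h c) = h j + (\<Sum>b<s. h (g b))"
proof -
  have "(\<Sum>c<n. h c) = (\<Sum>c\<in>insert j (g ` {..<s}). h c)"
    by (rule sum.mono_neutral_right) (use g h j in auto)
  also have "\<dots> = h j + (\<Sum>c\<in>g ` {..<s}. h c)"
    using j by (subst sum.insert) auto
  also have "(\<Sum>c\<in>g ` {..<s}. h c) = (\<Sum>b<s. h (g b))"
    by (rule sum.reindex[OF g(1), unfolded comp_def])
  finally show ?thesis .
qed

text \<open>The row \<open>f s\<close> is irrelevant: by Laplace expansion along it, the \<open>i\<close>-th entry
  of \<open>M\<close> times this vector is the minor in which that row is replaced by row \<open>i\<close>.\<close>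

definition cofactor_vec :: "'a::comm_ring_1 mat \<Rightarrow> nat \<Rightarrow> (nat \<Rightarrow> nat) \<Rightarrow> (nat \<Rightarrow> nat) \<Rightarrow> 'a vec" where
  "cofactor_vec M s f g = vec (dim_col M)
     (\<lambda>c. \<Sum>b<Suc s. if g b = c then cofactor (minor_mat M (Suc s) f g) s b else 0)"

lemma dim_cofactor_vec [simp]: "dim_vec (cofactor_vec M s f g) = dim_col M"
  by (simp add: cofactor_vec_def)

lemma cofactor_vec_carrier: "M \<in> carrier_mat m n \<Longrightarrow> cofactor_vec M s f g \<in> carrier_vec n"
  by (simp add: cofactor_vec_def)

lemma cofactor_vec_cong:
  assumes "\<And>a. a < s \<Longrightarrow> f a = f' a" "\<And>b. b < Suc s \<Longrightarrow> g b = g' b"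
  shows "cofactor_vec M s f g = cofactor_vec M s f' g'"
proof -
  have "mat_delete (minor_mat M (Suc s) f g) s b = mat_delete (minor_mat M (Suc s) f' g') s b" for b
    by (rule eq_matI) (use assms in \<open>auto simp: mat_delete_def\<close>)
  then have "cofactor (minor_mat M (Suc s) f g) s b = cofactor (minor_mat M (Suc s) f' g') s b" for b
    by (simp add: cofactor_def)
  then have "(\<Sum>b<Suc s. if g b = c then cofactor (minor_mat M (Suc s) f g) s b else 0)
      = (\<Sum>b<Suc s. if g' b = c then cofactor (minor_mat M (Suc s) f' g') s b else 0)" for c
    using assms(2) by (intro sum.cong) auto
  then show ?thesis unfolding cofactor_vec_def by simp
qed

lemma cofactor_minor_mat_last_row:
  "cofactor (minor_mat M (Suc s) (f(s := i)) g) s b = cofactor (minor_mat M (Suc s) f g) s b"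
proof -
  have "mat_delete (minor_mat M (Suc s) (f(s := i)) g) s b = mat_delete (minor_mat M (Suc s) f g) s b"
    by (rule eq_matI) (auto simp: mat_delete_def)
  then show ?thesis by (simp add: cofactor_def)
qed

lemma mult_cofactor_vec:
  assumes M: "M \<in> carrier_mat m n" and g: "\<forall>b<Suc s. g b < n" and i: "i < m"
  shows "(M *\<^sub>v cofactor_vec M s f g) $ i = det (minor_mat M (Suc s) (f(s := i)) g)"
proof -
  let ?N = "minor_mat M (Suc s) (f(s := i)) g"
  have "(M *\<^sub>v cofactor_vec M s f g) $ i
      = (\<Sum>b<Suc s. M $$ (i, g b) * cofactor (minor_mat M (Suc s) f g) s b)"
    unfolding cofactor_vec_def carrier_matD(2)[OF M]
    by (rule mult_mat_vec_scatter[OF M _ _ i]) (use g in auto)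
  also have "\<dots> = (\<Sum>b<Suc s. ?N $$ (s, b) * cofactor ?N s b)"
    by (simp add: cofactor_minor_mat_last_row)
  also have "\<dots> = det ?N"
    by (rule laplace_expansion_row[symmetric]) auto
  finally show ?thesis .
qed

lemma cofactor_vec_in_kernel:
  assumes M: "M \<in> carrier_mat m n" and g: "\<forall>b<Suc s. g b < n"
    and minors: "\<And>i. i < m \<Longrightarrow> det (minor_mat M (Suc s) (f(s := i)) g) = 0"
  shows "cofactor_vec M s f g \<in> mat_kernel M"
proof (rule mat_kernelI[OF M cofactor_vec_carrier[OF M]])
  show "M *\<^sub>v cofactor_vec M s f g = 0\<^sub>v m"
    by (rule eq_vecI) (use M mult_cofactor_vec[OF M g] minors in auto)
qed

lemma cofactor_vec_index_last:
  assumes M: "M \<in> carrier_mat m n" and j: "j < n" "g s = j" "j \<notin> g ` {..<s}"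
  shows "cofactor_vec M s f g $ j = det (minor_mat M s f g)"
proof -
  have "cofactor_vec M s f g $ j = (\<Sum>b<Suc s. if g b = j then cofactor (minor_mat M (Suc s) f g) s b else 0)"
    using M j by (simp add: cofactor_vec_def)
  also have "\<dots> = (\<Sum>b<Suc s. if b = s then cofactor (minor_mat M (Suc s) f g) s b else 0)"
    using j by (intro sum.cong refl) (auto simp: less_Suc_eq, metis imageI lessThan_iff)
  also have "\<dots> = cofactor (minor_mat M (Suc s) f g) s s" by simp
  also have "mat_delete (minor_mat M (Suc s) f g) s s = minor_mat M s f g"
    by (rule eq_matI) (auto simp: mat_delete_def)
  then have "cofactor (minor_mat M (Suc s) f g) s s = det (minor_mat M s f g)"
    by (simp add: cofactor_def)
  finally show ?thesis .
qed

lemma cofactor_vec_index_outside: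
  assumes M: "M \<in> carrier_mat m n" and c: "c < n" "c \<notin> g ` {..s}"
  shows "cofactor_vec M s f g $ c = 0"
  using M c unfolding cofactor_vec_def by (auto simp: less_Suc_eq_le intro!: sum.neutral)

lemma (in vec_space) maximal_indpt_cols_exists:
  obtains S where "maximal S (\<lambda>T. T \<subseteq> set (cols A) \<and> lin_indpt T)"
  using maximal_exists[of "\<lambda>T. T \<subseteq> set (cols A) \<and> lin_indpt T" "card (set (cols A))" "{}"]
  by (meson List.finite_set card_mono empty_iff empty_subsetI finite_lin_indpt2 rev_finite_subset)

lemma (in vec_space) cols_subset_span_maximal_indpt:
  assumes A: "A \<in> carrier_mat n nc" and S: "maximal S (\<lambda>T. T \<subseteq> set (cols A) \<and> lin_indpt T)"
  shows "set (cols A) \<subseteq> span S"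
proof
  fix c assume c: "c \<in> set (cols A)"
  have SA: "S \<subseteq> set (cols A)" "lin_indpt S" using S by (auto simp: maximal_def)
  have cols: "set (cols A) \<subseteq> carrier_vec n" using A cols_dim by blast
  show "c \<in> span S"
  proof (cases "c \<in> S")
    case True
    then show ?thesis using in_own_span SA cols by blast
  next
    case False
    have "\<not> (S \<union> {c} \<subseteq> set (cols A) \<and> lin_indpt (S \<union> {c}))"
    proof
      assume "S \<union> {c} \<subseteq> set (cols A) \<and> lin_indpt (S \<union> {c})"
      then have "S \<union> {c} = S" using S unfolding maximal_def by blast
      with False show False by blast
    qed
    then have "lin_dep (S \<union> {c})" using SA c by blast
    then show ?thesis using lin_dep_iff_in_span[of S c] SA cols c False by auto
  qed
qed

lemma (in vec_space) rank_le_card_spanning: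
  assumes A: "A \<in> carrier_mat n nc" and T: "finite T" "T \<subseteq> carrier_vec n"
    and span: "set (cols A) \<subseteq> span T"
  shows "rank A \<le> card T"
proof -
  obtain S where S: "maximal S (\<lambda>T. T \<subseteq> set (cols A) \<and> lin_indpt T)"
    by (rule maximal_indpt_cols_exists)
  then have SA: "S \<subseteq> set (cols A)" "lin_indpt S" by (auto simp: maximal_def)
  have "S \<subseteq> span T" using SA(1) span by blast
  from replacement[OF finite_subset[OF SA(1)] T SA(2) this] have "card S \<le> card T" by auto
  then show ?thesis using rank_card_indpt[OF A S] by simp
qed

lemma (in vec_space) card_le_rank_indpt:
  assumes A: "A \<in> carrier_mat n nc" and U: "finite U" "lin_indpt U"
    and span: "U \<subseteq> span (set (cols A))"
  shows "card U \<le> rank A"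
proof -
  obtain S where S: "maximal S (\<lambda>T. T \<subseteq> set (cols A) \<and> lin_indpt T)"
    by (rule maximal_indpt_cols_exists)
  then have SA: "S \<subseteq> set (cols A)" "lin_indpt S" by (auto simp: maximal_def)
  have S_carrier: "S \<subseteq> carrier_vec n" using SA(1) A cols_dim by blast
  have "span (set (cols A)) \<subseteq> span S"
    by (rule span_subsetI[OF S_carrier cols_subset_span_maximal_indpt[OF A S]])
  with span have "U \<subseteq> span S" by blast
  from replacement[OF U(1) finite_subset[OF SA(1)] S_carrier U(2) this] have "card U \<le> card S" by auto
  then show ?thesis using rank_card_indpt[OF A S] by simp
qed

lemma (in vec_space) lin_indpt_by_pivots:
  assumes U: "U \<subseteq> carrier_vec n"
    and pivot: "\<And>u. u \<in> U \<Longrightarrow> p u < n \<and> u $ p u \<noteq> 0"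
    and others: "\<And>u u'. u \<in> U \<Longrightarrow> u' \<in> U \<Longrightarrow> u' \<noteq> u \<Longrightarrow> u' $ p u = 0"
  shows "lin_indpt U"
proof
  assume "lin_dep U"
  then obtain A a v where A: "finite A" "A \<subseteq> U" "lincomb a A = \<zero>\<^bsub>V\<^esub>" "v \<in> A" "a v \<noteq> 0"
    unfolding lin_dep_def by auto
  have v: "p v < n" "v $ p v \<noteq> 0" using pivot A by auto
  have "lincomb a A $ p v = (\<Sum>x\<in>A. a x * x $ p v)"
    by (rule lincomb_index[OF v(1)]) (use A U in auto)
  also have "\<dots> = a v * v $ p v + (\<Sum>x\<in>A - {v}. a x * x $ p v)"
    by (rule sum.remove[OF A(1,4)])
  also have "(\<Sum>x\<in>A - {v}. a x * x $ p v) = 0"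
  proof (rule sum.neutral, rule ballI)
    fix x assume "x \<in> A - {v}"
    then have "v \<in> U" "x \<in> U" "x \<noteq> v" using A by auto
    then have "x $ p v = 0" by (rule others)
    then show "a x * x $ p v = 0" by simp
  qed
  finally have "lincomb a A $ p v \<noteq> 0" using v A by simp
  then show False using A(3) v by simp
qed

lemma (in vec_space) mat_image_eq_span_cols:
  assumes A: "A \<in> carrier_mat n nc"
  shows "mat_image A = span (set (cols A))"
proof -
  have "mat_image A = {y \<in> carrier_vec (dim_row A). \<exists>x\<in>carrier_vec (dim_col A). A *\<^sub>v x = y}"
  proof (intro equalityI subsetI)
    fix y assume "y \<in> mat_image A"
    then obtain x where x: "x \<in> carrier_vec (dim_col A)" and y: "y = A *\<^sub>v x"
      unfolding mat_image_def by blast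
    have "y \<in> carrier_vec (dim_row A)" unfolding y carrier_vec_def by simp
    then show "y \<in> {y \<in> carrier_vec (dim_row A). \<exists>x\<in>carrier_vec (dim_col A). A *\<^sub>v x = y}"
      using x y by blast
  next
    fix y assume "y \<in> {y \<in> carrier_vec (dim_row A). \<exists>x\<in>carrier_vec (dim_col A). A *\<^sub>v x = y}"
    then show "y \<in> mat_image A" unfolding mat_image_def by blast
  qed
  also have "\<dots> = span (set (cols A))"
    using col_space_eq[OF A] unfolding col_space_def by (rule sym)
  finally show ?thesis .
qed

lemma (in vec_space) mat_of_cols_mult_in_span:
  assumes ws: "set ws \<subseteq> carrier_vec n"
  shows "mat_of_cols n ws *\<^sub>v vec (length ws) c \<in> span (set ws)"
proof -
  have "lincomb_list c ws = mat_of_cols n ws *\<^sub>v vec (length ws) c"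
    by (rule lincomb_list_as_mat_mult) (use ws in auto)
  moreover have "lincomb_list c ws \<in> span_list ws"
    by (rule in_span_listI) auto
  ultimately show ?thesis using span_list_as_span[OF ws] by simp
qed

lemma mat_of_cols_mult_index:
  assumes "\<And>i. i < length ws \<Longrightarrow> ws ! i \<in> carrier_vec n" "r < n"
  shows "(mat_of_cols n ws *\<^sub>v vec (length ws) c) $ r = (\<Sum>i<length ws. ws ! i $ r * c i)"
  using assms by (auto simp: mat_of_cols_def scalar_prod_def atLeast0LessThan intro!: sum.cong)

section \<open>Maximal nonvanishing minors\<close>

locale maximal_minor =
  fixes M :: "'a::field mat" and m n s :: nat and f g :: "nat \<Rightarrow> nat"
  assumes carrier: "M \<in> carrier_mat m n"
    and rows_bound: "\<forall>a<s. f a < m" and cols_bound: "\<forall>b<s. g b < n"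
    and minor_nonzero: "det (minor_mat M s f g) \<noteq> 0"
    and larger_minors_vanish: "\<And>f' g'. (\<forall>a<Suc s. f' a < m) \<Longrightarrow> (\<forall>b<Suc s. g' b < n) \<Longrightarrow>
      det (minor_mat M (Suc s) f' g') = 0"
begin

abbreviation "\<delta> \<equiv> det (minor_mat M s f g)"

definition free_cols :: "nat set" where
  "free_cols = {j. j < n \<and> j \<notin> g ` {..<s}}"

definition kernel_vec :: "nat \<Rightarrow> 'a vec" where
  "kernel_vec j = cofactor_vec M s f (g(s := j))"

lemma inj_on_pivots: "inj_on g {..<s}" "inj_on f {..<s}"
  using minor_mat_inj_on[OF carrier rows_bound cols_bound minor_nonzero] by auto

lemma pivot_cols_subset: "g ` {..<s} \<subseteq> {..<n}"
  using cols_bound by auto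

lemma finite_free_cols: "finite free_cols"
  unfolding free_cols_def by auto

lemma card_free_cols: "card free_cols = n - s"
proof -
  have "free_cols = {..<n} - g ` {..<s}" unfolding free_cols_def by auto
  then show ?thesis
    using pivot_cols_subset card_image[OF inj_on_pivots(1)] by (simp add: card_Diff_subset)
qed

lemma kernel_vec_carrier: "kernel_vec j \<in> carrier_vec n"
  unfolding kernel_vec_def by (rule cofactor_vec_carrier[OF carrier])

lemma kernel_vec_in_kernel:
  assumes j: "j < n"
  shows "kernel_vec j \<in> mat_kernel M"
  unfolding kernel_vec_def
proof (rule cofactor_vec_in_kernel[OF carrier])
  show "\<forall>b<Suc s. (g(s := j)) b < n" using j cols_bound by (auto simp: less_Suc_eq)
  show "det (minor_mat M (Suc s) (f(s := i)) (g(s := j))) = 0" if "i < m" for i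
    by (rule larger_minors_vanish) (use that j rows_bound cols_bound in \<open>auto simp: less_Suc_eq\<close>)
qed

lemma mult_kernel_vec: "j < n \<Longrightarrow> M *\<^sub>v kernel_vec j = 0\<^sub>v m"
  using kernel_vec_in_kernel mat_kernelD(2)[OF carrier] by blast

lemma kernel_vec_free_col:
  assumes j: "j \<in> free_cols"
  shows "kernel_vec j $ j = \<delta>"
proof -
  have "(g(s := j)) ` {..<s} = g ` {..<s}" by auto
  then have "kernel_vec j $ j = det (minor_mat M s f (g(s := j)))"
    using j unfolding kernel_vec_def free_cols_def by (intro cofactor_vec_index_last[OF carrier]) auto
  also have "minor_mat M s f (g(s := j)) = minor_mat M s f g" by (rule eq_matI) auto
  finally show ?thesis .
qed

lemma kernel_vec_other_free_col:
  assumes "j < n" "c \<in> free_cols" "c \<noteq> j"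
  shows "kernel_vec j $ c = 0"
  unfolding kernel_vec_def using assms unfolding free_cols_def
  by (intro cofactor_vec_index_outside[OF carrier]) (auto simp: image_def le_less)

lemma mult_mat_vec_index:
  assumes "v \<in> carrier_vec n" "i < m"
  shows "(M *\<^sub>v v) $ i = (\<Sum>c<n. M $$ (i, c) * v $ c)"
  using assms carrier by (auto simp: scalar_prod_def atLeast0LessThan intro!: sum.cong)

text \<open>On the pivot columns, \<open>M u = 0\<close> restricts to a system with the invertible pivot minor.\<close>

lemma kernel_eq_0_if_free_cols_0:
  assumes u: "u \<in> mat_kernel M" and free: "\<And>j. j \<in> free_cols \<Longrightarrow> u $ j = 0" and c: "c < n"
  shows "u $ c = 0"
proof -
  have u_carrier: "u \<in> carrier_vec n" and Mu: "M *\<^sub>v u = 0\<^sub>v m"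
    using mat_kernelD[OF carrier u] by auto
  let ?y = "vec s (\<lambda>b. u $ g b)"
  have "minor_mat M s f g *\<^sub>v ?y = 0\<^sub>v s"
  proof (rule eq_vecI)
    fix a assume "a < dim_vec (0\<^sub>v s :: 'a vec)"
    then have a: "a < s" by simp
    have "(minor_mat M s f g *\<^sub>v ?y) $ a = (\<Sum>b<s. M $$ (f a, g b) * u $ g b)"
      using a by (auto simp: scalar_prod_def atLeast0LessThan intro!: sum.cong)
    also have "\<dots> = (\<Sum>c<n. M $$ (f a, c) * u $ c)"
      using free unfolding free_cols_def
      by (intro sum_lessThan_supported_on_image[symmetric] inj_on_pivots pivot_cols_subset) auto
    also have "\<dots> = 0"
      using Mu mult_mat_vec_index[OF u_carrier, of "f a"] rows_bound a by simp
    finally show "(minor_mat M s f g *\<^sub>v ?y) $ a = 0\<^sub>v s $ a" using a by simp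
  qed simp
  then have "?y = 0\<^sub>v s"
    using det_0_iff_vec_prod_zero_field[OF minor_mat_carrier] minor_nonzero by (meson vec_carrier)
  then have "u $ g b = 0" if "b < s" for b
    using that by (metis index_vec index_zero_vec(1))
  then show ?thesis using free c unfolding free_cols_def by blast
qed

lemma kernel_expansion:
  assumes v: "v \<in> mat_kernel M" and c: "c < n"
  shows "\<delta> * v $ c = (\<Sum>j\<in>free_cols. v $ j * kernel_vec j $ c)"
proof -
  have v_carrier: "v \<in> carrier_vec n" and Mv: "M *\<^sub>v v = 0\<^sub>v m"
    using mat_kernelD[OF carrier v] by auto
  define u where "u = vec n (\<lambda>c. \<delta> * v $ c - (\<Sum>j\<in>free_cols. v $ j * kernel_vec j $ c))"
  have u_carrier: "u \<in> carrier_vec n" unfolding u_def by simp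
  have "(M *\<^sub>v u) $ i = 0" if i: "i < m" for i
  proof -
    have "(M *\<^sub>v u) $ i = \<delta> * (\<Sum>c<n. M $$ (i, c) * v $ c)
        - (\<Sum>j\<in>free_cols. v $ j * (\<Sum>c<n. M $$ (i, c) * kernel_vec j $ c))"
      using mult_mat_vec_index[OF u_carrier i] unfolding u_def
      by (simp add: sum_subtractf sum_distrib_left algebra_simps sum.swap[of _ free_cols])
    also have "(\<Sum>c<n. M $$ (i, c) * v $ c) = 0"
      using mult_mat_vec_index[OF v_carrier i] Mv i by simp
    also have "(\<Sum>j\<in>free_cols. v $ j * (\<Sum>c<n. M $$ (i, c) * kernel_vec j $ c)) = 0"
    proof (intro sum.neutral ballI)
      fix j assume "j \<in> free_cols"
      then have "(M *\<^sub>v kernel_vec j) $ i = 0" using mult_kernel_vec i by (simp add: free_cols_def)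
      then show "v $ j * (\<Sum>c<n. M $$ (i, c) * kernel_vec j $ c) = 0"
        using mult_mat_vec_index[OF kernel_vec_carrier i] by simp
    qed
    finally show ?thesis by simp
  qed
  then have "u \<in> mat_kernel M"
    using u_carrier carrier by (intro mat_kernelI[OF carrier u_carrier] eq_vecI) auto
  moreover have "u $ j = 0" if j: "j \<in> free_cols" for j
  proof -
    have "(\<Sum>i\<in>free_cols. v $ i * kernel_vec i $ j) = v $ j * kernel_vec j $ j"
      using j kernel_vec_other_free_col finite_free_cols
      by (intro sum.remove[THEN trans]) (auto simp: free_cols_def intro!: sum.neutral)
    then show ?thesis
      using j kernel_vec_free_col[OF j] unfolding u_def free_cols_def by simp
  qed
  ultimately have "u $ c = 0" by (rule kernel_eq_0_if_free_cols_0[OF _ _ c])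
  then show ?thesis unfolding u_def using c by simp
qed

lemma col_in_span_pivot_cols:
  assumes j: "j < n"
  shows "col M j \<in> LinearCombinations.module.span class_ring (module_vec TYPE('a) m)
    ((\<lambda>b. col M (g b)) ` {..<s})"
proof -
  define ws where "ws = map (\<lambda>b. col M (g b)) [0..<s]"
  have ws: "set ws \<subseteq> carrier_vec m" and set_ws: "set ws = (\<lambda>b. col M (g b)) ` {..<s}"
    unfolding ws_def using carrier by auto
  show ?thesis
  proof (cases "j \<in> g ` {..<s}")
    case True
    then have "col M j \<in> set ws" unfolding set_ws by auto
    then show ?thesis
      unfolding set_ws[symmetric]
      by (rule vectorspace.span_mem[OF vec_vs, rotated]) (use ws in \<open>simp add: module_vec_simps\<close>)
  next
    case False
    then have free: "j \<in> free_cols" using j unfolding free_cols_def by auto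
    define c where "c b = - (kernel_vec j $ g b) / \<delta>" for b
    have "col M j = mat_of_cols m ws *\<^sub>v vec (length ws) c"
    proof (rule eq_vecI)
      fix i assume "i < dim_vec (mat_of_cols m ws *\<^sub>v vec (length ws) c)"
      then have i: "i < m" by simp
      have "0 = (M *\<^sub>v kernel_vec j) $ i" using mult_kernel_vec[OF j] i by simp
      also have "\<dots> = (\<Sum>c<n. M $$ (i, c) * kernel_vec j $ c)"
        by (rule mult_mat_vec_index[OF kernel_vec_carrier i])
      also have "\<dots> = M $$ (i, j) * \<delta> + (\<Sum>b<s. M $$ (i, g b) * kernel_vec j $ g b)"
        using kernel_vec_other_free_col[OF j] kernel_vec_free_col[OF free] j False
        by (subst sum_lessThan_supported_on_insert_image[OF inj_on_pivots(1) pivot_cols_subset])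
          (auto simp: free_cols_def)
      finally have "M $$ (i, j) * \<delta> = - (\<Sum>b<s. M $$ (i, g b) * kernel_vec j $ g b)"
        by (simp add: eq_neg_iff_add_eq_0 add.commute)
      then have "M $$ (i, j) = - (\<Sum>b<s. M $$ (i, g b) * kernel_vec j $ g b) / \<delta>"
        using minor_nonzero by (simp add: field_simps)
      also have "\<dots> = (\<Sum>b<s. M $$ (i, g b) * c b)"
        unfolding c_def by (simp add: sum_divide_distrib sum_negf)
      also have "\<dots> = (mat_of_cols m ws *\<^sub>v vec (length ws) c) $ i"
        using mat_of_cols_mult_index[of ws m i c] ws i carrier cols_bound unfolding ws_def by auto
      finally show "col M j $ i = (mat_of_cols m ws *\<^sub>v vec (length ws) c) $ i"
        using i j carrier by simp
    qed (use carrier in simp)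
    then show ?thesis using vec_space.mat_of_cols_mult_in_span[OF ws] set_ws by simp
  qed
qed

lemma rank_eq: "vec_space.rank m M = s"
proof (rule antisym)
  have "vec_space.rank m M \<le> card ((\<lambda>b. col M (g b)) ` {..<s})"
    using col_in_span_pivot_cols carrier
    by (intro vec_space.rank_le_card_spanning[OF carrier]) (auto simp: cols_def)
  also have "\<dots> \<le> s" using card_image_le[of "{..<s}"] by simp
  finally show "vec_space.rank m M \<le> s" .
  show "s \<le> vec_space.rank m M"
    by (rule vec_space.minor_le_rank[OF carrier rows_bound cols_bound minor_nonzero])
qed

lemma inj_on_kernel_vec: "inj_on kernel_vec free_cols"
proof
  fix j1 j2 assume j: "j1 \<in> free_cols" "j2 \<in> free_cols" "kernel_vec j1 = kernel_vec j2"
  show "j1 = j2"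
  proof (rule ccontr)
    assume "j1 \<noteq> j2"
    then have "kernel_vec j2 $ j1 = 0"
      using j kernel_vec_other_free_col unfolding free_cols_def by blast
    then show False using j(3) kernel_vec_free_col[OF j(1)] minor_nonzero by simp
  qed
qed

lemma kernel_subset_span_kernel_vecs:
  "mat_kernel M \<subseteq> LinearCombinations.module.span class_ring (module_vec TYPE('a) n)
    (kernel_vec ` free_cols)"
proof
  fix v assume v: "v \<in> mat_kernel M"
  then have v_carrier: "v \<in> carrier_vec n" using mat_kernelD[OF carrier] by auto
  define js where "js = sorted_list_of_set free_cols"
  have js: "distinct js" "set js = free_cols" unfolding js_def using finite_free_cols by auto
  define ws where "ws = map kernel_vec js"
  have ws: "set ws \<subseteq> carrier_vec n" and set_ws: "set ws = kernel_vec ` free_cols"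
    unfolding ws_def using kernel_vec_carrier js by auto
  define a where "a i = v $ (js ! i) / \<delta>" for i
  have "v = mat_of_cols n ws *\<^sub>v vec (length ws) a"
  proof (rule eq_vecI)
    fix c assume "c < dim_vec (mat_of_cols n ws *\<^sub>v vec (length ws) a)"
    then have c: "c < n" by simp
    have "(mat_of_cols n ws *\<^sub>v vec (length ws) a) $ c = (\<Sum>j\<leftarrow>js. kernel_vec j $ c * (v $ j / \<delta>))"
      using mat_of_cols_mult_index[of ws n c a] ws c kernel_vec_carrier
      unfolding ws_def a_def by (simp add: sum_list_sum_nth atLeast0LessThan)
    also have "\<dots> = (\<Sum>j\<in>free_cols. kernel_vec j $ c * (v $ j / \<delta>))"
      unfolding js(2)[symmetric] sum.distinct_set_conv_list[OF js(1)] ..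
    also have "\<dots> = (\<Sum>j\<in>free_cols. v $ j * kernel_vec j $ c) / \<delta>"
      by (simp add: sum_divide_distrib algebra_simps)
    also have "\<dots> = v $ c" using kernel_expansion[OF v c] minor_nonzero by (simp add: field_simps)
    finally show "v $ c = (mat_of_cols n ws *\<^sub>v vec (length ws) a) $ c" by simp
  qed (use v_carrier in simp)
  then show "v \<in> LinearCombinations.module.span class_ring (module_vec TYPE('a) n) (kernel_vec ` free_cols)"
    using vec_space.mat_of_cols_mult_in_span[OF ws] set_ws by simp
qed

lemma lin_indpt_kernel_vecs:
  "LinearCombinations.module.lin_indpt class_ring (module_vec TYPE('a) n) (kernel_vec ` free_cols)"
proof (rule vec_space.lin_indpt_by_pivots)
  let ?p = "the_inv_into free_cols kernel_vec"
  have p: "?p (kernel_vec j) = j" if "j \<in> free_cols" for j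
    using the_inv_into_f_f[OF inj_on_kernel_vec that] .
  show "kernel_vec ` free_cols \<subseteq> carrier_vec n" using kernel_vec_carrier by auto
  show "?p u < n \<and> u $ ?p u \<noteq> 0" if "u \<in> kernel_vec ` free_cols" for u
    using that p kernel_vec_free_col minor_nonzero unfolding free_cols_def by auto
  show "u' $ ?p u = 0"
    if u: "u \<in> kernel_vec ` free_cols" and u': "u' \<in> kernel_vec ` free_cols" and "u' \<noteq> u" for u u'
  proof -
    obtain j j' where j: "j \<in> free_cols" "j' \<in> free_cols" "u = kernel_vec j" "u' = kernel_vec j'"
      using u u' by blast
    then have "j \<noteq> j'" using \<open>u' \<noteq> u\<close> by blast
    then show ?thesis
      using j p kernel_vec_other_free_col unfolding free_cols_def by auto
  qed
qed

lemma kernel_vec_scalar_prod: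
  assumes j: "j \<in> free_cols" and u: "u \<in> carrier_vec n" and pivots: "\<forall>b<s. u $ g b = 0"
  shows "kernel_vec j \<bullet> u = \<delta> * u $ j"
proof -
  have "kernel_vec j \<bullet> u = (\<Sum>c<n. kernel_vec j $ c * u $ c)"
    using u by (simp add: scalar_prod_def atLeast0LessThan)
  also have "\<dots> = kernel_vec j $ j * u $ j + (\<Sum>b<s. kernel_vec j $ g b * u $ g b)"
    using j kernel_vec_other_free_col
    by (intro sum_lessThan_supported_on_insert_image[OF inj_on_pivots(1) pivot_cols_subset])
      (auto simp: free_cols_def)
  finally show ?thesis using pivots kernel_vec_free_col[OF j] by simp
qed

lemma pivot_rows_solvable:
  assumes v: "v \<in> carrier_vec m"
  obtains x where "x \<in> carrier_vec n" "\<And>a. a < s \<Longrightarrow> (M *\<^sub>v x) $ f a = v $ f a"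
proof
  let ?S = "minor_mat M s f g"
  define y where "y = vec s (\<lambda>a. v $ f a)"
  define x' where "x' = adj_mat ?S *\<^sub>v y"
  have "?S *\<^sub>v x' = (?S * adj_mat ?S) *\<^sub>v y"
    unfolding x'_def y_def
    by (rule assoc_mult_mat_vec[symmetric, OF minor_mat_carrier adj_mat(1)[OF minor_mat_carrier]]) simp
  also have "\<dots> = \<delta> \<cdot>\<^sub>v y"
    unfolding adj_mat(2)[OF minor_mat_carrier] y_def by auto
  finally have S_x': "?S *\<^sub>v x' = \<delta> \<cdot>\<^sub>v y" .
  define x where "x = vec n (\<lambda>c. \<Sum>b<s. if g b = c then x' $ b / \<delta> else 0)"
  show "x \<in> carrier_vec n" unfolding x_def by simp
  fix a assume a: "a < s"
  have x'_carrier: "x' \<in> carrier_vec s"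
    unfolding x'_def by (rule mult_mat_vec_carrier[OF adj_mat(1)[OF minor_mat_carrier]]) (simp add: y_def)
  have "(M *\<^sub>v x) $ f a = (\<Sum>b<s. M $$ (f a, g b) * (x' $ b / \<delta>))"
    unfolding x_def by (rule mult_mat_vec_scatter[OF carrier]) (use cols_bound rows_bound a in auto)
  also have "\<dots> = (?S *\<^sub>v x') $ a / \<delta>"
    using a x'_carrier by (auto simp: scalar_prod_def atLeast0LessThan sum_divide_distrib intro!: sum.cong)
  also have "\<dots> = v $ f a" using S_x' a minor_nonzero by (simp add: y_def)
  finally show "(M *\<^sub>v x) $ f a = v $ f a" .
qed

end

lemma maximal_minor_transpose:
  assumes "maximal_minor M m n s f g"
  shows "maximal_minor (transpose_mat M) n m s g f"
proof -
  interpret maximal_minor M m n s f g by (fact assms)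
  show ?thesis
  proof
    show "det (minor_mat (transpose_mat M) s g f) \<noteq> 0"
      using minor_nonzero det_minor_mat_transpose[OF carrier rows_bound cols_bound] by simp
    show "det (minor_mat (transpose_mat M) (Suc s) f' g') = 0"
      if "\<forall>a<Suc s. f' a < n" "\<forall>b<Suc s. g' b < m" for f' g'
      using that larger_minors_vanish det_minor_mat_transpose[OF carrier, of "Suc s" g' f'] by simp
  qed (use carrier rows_bound cols_bound in auto)
qed

context maximal_minor
begin

text \<open>The kernel vectors of the transpose are the rows of the cokernel; testing \<open>v - M x\<close> against them,
  with \<open>x\<close> matching \<open>v\<close> on the pivot rows, shows that the difference vanishes.\<close>

lemma in_image_if_orthogonal_left_kernel:
  assumes v: "v \<in> carrier_vec m"
    and orth: "\<And>u. u \<in> mat_kernel (transpose_mat M) \<Longrightarrow> u \<bullet> v = 0"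
  shows "v \<in> mat_image M"
proof -
  interpret T: maximal_minor "transpose_mat M" n m s g f
    by (rule maximal_minor_transpose) unfold_locales
  have T_det: "det (minor_mat (transpose_mat M) s g f) = \<delta>"
    by (rule det_minor_mat_transpose[OF carrier rows_bound cols_bound])
  obtain x where x: "x \<in> carrier_vec n" and x_pivots: "\<And>a. a < s \<Longrightarrow> (M *\<^sub>v x) $ f a = v $ f a"
    using pivot_rows_solvable[OF v] by blast
  define u where "u = v - M *\<^sub>v x"
  have u: "u \<in> carrier_vec m" unfolding u_def using v carrier x by simp
  have u_index: "u $ i = v $ i - (M *\<^sub>v x) $ i" if "i < m" for i
    unfolding u_def using that v carrier x by simp
  have u_pivots: "\<forall>a<s. u $ f a = 0" using u_index rows_bound x_pivots by simp
  have "u $ i = 0" if i: "i < m" for i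
  proof (cases "i \<in> f ` {..<s}")
    case True
    then show ?thesis using u_pivots by auto
  next
    case False
    then have free: "i \<in> T.free_cols" using i unfolding T.free_cols_def by simp
    have "T.kernel_vec i \<bullet> u = T.kernel_vec i \<bullet> v - T.kernel_vec i \<bullet> (M *\<^sub>v x)"
      unfolding u_def using T.kernel_vec_carrier v carrier x by (intro scalar_prod_minus_distrib) auto
    also have "T.kernel_vec i \<bullet> (M *\<^sub>v x) = (transpose_mat M *\<^sub>v T.kernel_vec i) \<bullet> x"
      by (rule transpose_vec_mult_scalar[OF carrier x T.kernel_vec_carrier, symmetric])
    also have "\<dots> = 0" using T.mult_kernel_vec i x by simp
    finally have "T.kernel_vec i \<bullet> u = 0"
      using orth T.kernel_vec_in_kernel i by simp
    then show ?thesis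
      using T.kernel_vec_scalar_prod[OF free u u_pivots] T_det minor_nonzero by simp
  qed
  then have "v = M *\<^sub>v x" using u_index v carrier by (intro eq_vecI) auto
  then show ?thesis unfolding mat_image_def using x carrier by auto
qed

end

lemma maximal_minor_exists:
  fixes M :: "'a::field mat"
  assumes M: "M \<in> carrier_mat m n"
  obtains f g where "maximal_minor M m n (vec_space.rank m M) f g"
proof -
  define P where "P s \<longleftrightarrow> (\<exists>f g. (\<forall>a<s. f a < m) \<and> (\<forall>b<s. g b < n) \<and> det (minor_mat M s f g) \<noteq> 0)"
    for s
  have P_bound: "s \<le> n" if "P s" for s
    using that vec_space.minor_le_rank[OF M] vec_space.rank_le_nc[OF M] unfolding P_def
    by (meson order_trans)
  define s where "s = Greatest P"
  have "P s" unfolding s_def by (rule GreatestI_nat[of P 0 n]) (auto simp: P_def P_bound)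
  then obtain f g where fg: "\<forall>a<s. f a < m" "\<forall>b<s. g b < n" "det (minor_mat M s f g) \<noteq> 0"
    unfolding P_def by blast
  have "\<not> P (Suc s)"
    using Greatest_le_nat[of P _ n] P_bound unfolding s_def by fastforce
  then have "maximal_minor M m n s f g"
    using M fg unfolding P_def by unfold_locales blast+
  moreover from this have "vec_space.rank m M = s" by (rule maximal_minor.rank_eq)
  ultimately show ?thesis using that by simp
qed

lemma rank_transpose:
  fixes M :: "'a::field mat"
  assumes M: "M \<in> carrier_mat m n"
  shows "vec_space.rank n (transpose_mat M) = vec_space.rank m M"
proof -
  obtain f g where "maximal_minor M m n (vec_space.rank m M) f g"
    by (rule maximal_minor_exists[OF M])
  then have "maximal_minor (transpose_mat M) n m (vec_space.rank m M) g f"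
    by (rule maximal_minor_transpose)
  then show ?thesis by (rule maximal_minor.rank_eq)
qed

lemma mat_image_subset_kernel_if_mult_0:
  assumes A: "A \<in> carrier_mat m n" and B: "B \<in> carrier_mat n p" and AB: "A * B = 0\<^sub>m m p"
  shows "mat_image B \<subseteq> mat_kernel A"
proof
  fix y assume "y \<in> mat_image B"
  then obtain x where x: "x \<in> carrier_vec p" and y: "y = B *\<^sub>v x"
    using B unfolding mat_image_def by auto
  have "A *\<^sub>v y = (A * B) *\<^sub>v x" unfolding y using A B x by (simp add: assoc_mult_mat_vec)
  also have "\<dots> = 0\<^sub>v m" unfolding AB using x by (intro eq_vecI) (auto simp: scalar_prod_def)
  finally show "y \<in> mat_kernel A" using B x y by (intro mat_kernelI[OF A]) auto
qed

lemma mult_eq_0_if_cols_in_kernel: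
  assumes A: "A \<in> carrier_mat m n" and B: "B \<in> carrier_mat n p"
    and cols_kernel: "set (cols B) \<subseteq> mat_kernel A"
  shows "A * B = 0\<^sub>m m p"
proof (rule eq_matI)
  fix i c assume "i < dim_row (0\<^sub>m m p :: 'a mat)" "c < dim_col (0\<^sub>m m p :: 'a mat)"
  then have i: "i < m" and c: "c < p" by auto
  have "col B c \<in> mat_kernel A" using cols_kernel B c by (auto simp: cols_def)
  then have "A *\<^sub>v col B c = 0\<^sub>v m" using mat_kernelD[OF A] by blast
  moreover have "(A * B) $$ (i, c) = (A *\<^sub>v col B c) $ i" using A B i c by simp
  ultimately show "(A * B) $$ (i, c) = 0\<^sub>m m p $$ (i, c)" using i c by simp
qed (use A B in auto)

lemma rank_add_rank_if_image_eq_kernel: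
  fixes A B :: "'a::field mat"
  assumes A: "A \<in> carrier_mat m n" and B: "B \<in> carrier_mat n p"
    and exact: "mat_image B = mat_kernel A"
  shows "vec_space.rank n B + vec_space.rank m A = n"
proof -
  obtain f g where "maximal_minor A m n (vec_space.rank m A) f g"
    by (rule maximal_minor_exists[OF A])
  then interpret maximal_minor A m n "vec_space.rank m A" f g .
  let ?K = "kernel_vec ` free_cols"
  have image: "mat_image B = LinearCombinations.module.span class_ring (module_vec TYPE('a) n) (set (cols B))"
    by (rule vec_space.mat_image_eq_span_cols[OF B])
  have "set (cols B) \<subseteq> mat_image B"
    unfolding image using cols_dim[of B] B
    by (intro subsetI vectorspace.span_mem[OF vec_vs]) (auto simp: module_vec_simps)
  also note exact
  also note kernel_subset_span_kernel_vecs
  finally have "vec_space.rank n B \<le> card ?K"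
    using finite_free_cols kernel_vec_carrier by (intro vec_space.rank_le_card_spanning[OF B]) auto
  moreover have "?K \<subseteq> mat_kernel A"
    using kernel_vec_in_kernel unfolding free_cols_def by blast
  then have "card ?K \<le> vec_space.rank n B"
    using lin_indpt_kernel_vecs finite_free_cols unfolding exact[symmetric] image
    by (intro vec_space.card_le_rank_indpt[OF B]) auto
  moreover have "card ?K = n - vec_space.rank m A"
    using card_image[OF inj_on_kernel_vec] card_free_cols by simp
  ultimately show ?thesis using vec_space.rank_le_nc[OF A] by simp
qed

lemma mat_image_eq_kernel_by_duality:
  fixes A :: "'a::field mat"
  assumes A: "A \<in> carrier_mat m n" and Q: "Q \<in> carrier_mat q m" and QA: "Q * A = 0\<^sub>m q n"
    and dual: "mat_kernel (transpose_mat A) \<subseteq> mat_image (transpose_mat Q)"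
  shows "mat_image A = mat_kernel Q"
proof
  show "mat_image A \<subseteq> mat_kernel Q" by (rule mat_image_subset_kernel_if_mult_0[OF Q A QA])
  show "mat_kernel Q \<subseteq> mat_image A"
  proof
    fix v assume v: "v \<in> mat_kernel Q"
    then have v_carrier: "v \<in> carrier_vec m" and Qv: "Q *\<^sub>v v = 0\<^sub>v q"
      using mat_kernelD[OF Q] by auto
    obtain f g where "maximal_minor A m n (vec_space.rank m A) f g"
      by (rule maximal_minor_exists[OF A])
    then show "v \<in> mat_image A"
    proof (rule maximal_minor.in_image_if_orthogonal_left_kernel[OF _ v_carrier])
      fix u assume "u \<in> mat_kernel (transpose_mat A)"
      then obtain x where x: "x \<in> carrier_vec q" and u: "u = transpose_mat Q *\<^sub>v x"
        using dual Q unfolding mat_image_def by auto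
      have "u \<bullet> v = x \<bullet> (Q *\<^sub>v v)" unfolding u by (rule transpose_vec_mult_scalar[OF Q v_carrier x])
      then show "u \<bullet> v = 0" using Qv x by simp
    qed
  qed
qed

lemma continuous_det [continuous_intros]:
  fixes F :: "'b::t2_space \<Rightarrow> 'a::real_normed_field mat"
  assumes F: "\<And>t. F t \<in> carrier_mat s s"
    and entries: "\<And>i j. i < s \<Longrightarrow> j < s \<Longrightarrow> continuous L (\<lambda>t. F t $$ (i, j))"
  shows "continuous L (\<lambda>t. det (F t))"
proof -
  have "det (F t) = (\<Sum>p\<in>{p. p permutes {0..<s}}. of_int (sign p) * (\<Prod>i\<in>{0..<s}. F t $$ (i, p i)))" for t
    using F[of t] unfolding det_def by simp
  moreover have "continuous L (\<lambda>t. \<Sum>p\<in>{p. p permutes {0..<s}}. of_int (sign p) * (\<Prod>i\<in>{0..<s}. F t $$ (i, p i)))"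
  proof (intro continuous_intros)
    fix p i assume "p \<in> {p. p permutes {0..<s}}" "i \<in> {0..<s}"
    then show "continuous L (\<lambda>t. F t $$ (i, p i))"
      using entries permutes_in_image by fastforce
  qed
  ultimately show ?thesis by simp
qed

lemma eventually_rank_ge:
  fixes F :: "'b::t2_space \<Rightarrow> 'a::real_normed_field mat"
  assumes F: "\<And>t. F t \<in> carrier_mat m n"
    and entries: "\<And>i j. i < m \<Longrightarrow> j < n \<Longrightarrow> continuous (at t0 within S) (\<lambda>t. F t $$ (i, j))"
  shows "eventually (\<lambda>t. vec_space.rank m (F t0) \<le> vec_space.rank m (F t)) (at t0 within S)"
proof -
  let ?r = "vec_space.rank m (F t0)"
  obtain f g where "maximal_minor (F t0) m n ?r f g"
    by (rule maximal_minor_exists[OF F])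
  then interpret maximal_minor "F t0" m n ?r f g .
  have "continuous (at t0 within S) (\<lambda>t. det (minor_mat (F t) ?r f g))"
    using entries rows_bound cols_bound by (intro continuous_det) auto
  then have "eventually (\<lambda>t. det (minor_mat (F t) ?r f g) \<noteq> 0) (at t0 within S)"
    using minor_nonzero tendsto_imp_eventually_ne unfolding continuous_within by blast
  then show ?thesis
  proof (rule eventually_mono)
    fix t assume "det (minor_mat (F t) ?r f g) \<noteq> 0"
    then show "?r \<le> vec_space.rank m (F t)" by (rule vec_space.minor_le_rank[OF F rows_bound cols_bound])
  qed
qed

text \<open>Both ranks are lower semicontinuous and their sum is constant, so each is locally constant.\<close>

lemma rank_constant_if_image_eq_kernel_on_connected:
  fixes A B :: "'b::t2_space \<Rightarrow> 'a::real_normed_field mat"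
  assumes S: "connected S" and x: "x \<in> S" and y: "y \<in> S"
    and A: "\<And>t. A t \<in> carrier_mat m n" and B: "\<And>t. B t \<in> carrier_mat n p"
    and cont_A: "\<And>t i j. t \<in> S \<Longrightarrow> i < m \<Longrightarrow> j < n \<Longrightarrow> continuous (at t within S) (\<lambda>t. A t $$ (i, j))"
    and cont_B: "\<And>t i j. t \<in> S \<Longrightarrow> i < n \<Longrightarrow> j < p \<Longrightarrow> continuous (at t within S) (\<lambda>t. B t $$ (i, j))"
    and exact: "\<And>t. t \<in> S \<Longrightarrow> mat_image (B t) = mat_kernel (A t)"
  shows "vec_space.rank m (A x) = vec_space.rank m (A y)"
proof (rule connected_local_const[OF S x y], intro ballI)
  fix t0 assume t0: "t0 \<in> S"
  have sum: "vec_space.rank n (B t) + vec_space.rank m (A t) = n" if "t \<in> S" for t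
    using rank_add_rank_if_image_eq_kernel[OF A B exact[OF that]] .
  have "eventually (\<lambda>t. vec_space.rank m (A t0) \<le> vec_space.rank m (A t)
      \<and> vec_space.rank n (B t0) \<le> vec_space.rank n (B t)) (at t0 within S)"
    using eventually_rank_ge[OF A cont_A[OF t0]] eventually_rank_ge[OF B cont_B[OF t0]]
    by (rule eventually_conj)
  moreover have "eventually (\<lambda>t. t \<in> S) (at t0 within S)"
    unfolding eventually_at_filter by simp
  ultimately show "eventually (\<lambda>t. vec_space.rank m (A t0) = vec_space.rank m (A t)) (at t0 within S)"
  proof eventually_elim
    case (elim t)
    then show ?case using sum[of t] sum[OF t0] by linarith
  qed
qed

section \<open>Symbols\<close>

lemma symbolC_carrier [simp]: "symbolC m n k A \<xi> \<in> carrier_mat m n"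
  and symbolC_dim [simp]: "dim_row (symbolC m n k A \<xi>) = m" "dim_col (symbolC m n k A \<xi>) = n"
  by (simp_all add: symbolC_def)

lemma symbolC_index [simp]: "i < m \<Longrightarrow> j < n \<Longrightarrow> symbolC m n k A \<xi> $$ (i, j) = hpoly_eval k (A i j) \<xi>"
  by (simp add: symbolC_def)

lemma crank_symbolC [simp]: "crank (symbolC m n k A \<xi>) = vec_space.rank m (symbolC m n k A \<xi>)"
  by (simp add: crank_def)

lemma symbolC_transpose: "symbolC n m k (\<lambda>i j. A j i) \<xi> = transpose_mat (symbolC m n k A \<xi>)"
  by (rule eq_matI) auto

lemma symbolC_degree_0: "symbolC m n 0 A \<xi> = symbolC m n 0 A \<eta>"
  by (rule eq_matI) (auto simp: hpoly_eval_degree_0)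

lemma symbolC_of_hpolys:
  assumes "\<And>i j. i < m \<Longrightarrow> j < n \<Longrightarrow> F i j \<in> hpolys k"
  obtains C where "\<And>\<xi>. symbolC m n k C \<xi> = mat m n (\<lambda>(i, j). F i j \<xi>)"
proof -
  have "\<forall>i j. \<exists>c. i < m \<longrightarrow> j < n \<longrightarrow> F i j = hpoly_eval k c"
    using assms unfolding hpolys_def by blast
  then obtain C where "\<And>i j. i < m \<Longrightarrow> j < n \<Longrightarrow> F i j = hpoly_eval k (C i j)"
    by metis
  then show thesis by (intro that eq_matI) auto
qed

lemma hpolys_cofactor_vec_index:
  assumes f: "\<forall>a<r. f a < m" and g: "\<forall>b<Suc r. g b < n" and i: "i < n"
  shows "(\<lambda>\<xi>. cofactor_vec (symbolC m n k A \<xi>) r f g $ i) \<in> hpolys (r * k)"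
proof -
  let ?N = "\<lambda>\<xi>. minor_mat (symbolC m n k A \<xi>) (Suc r) f g"
  have minor: "(\<lambda>\<xi>. det (mat_delete (?N \<xi>) r b)) \<in> hpolys (r * k)" for b
  proof (rule hpolys_det)
    show "mat_delete (?N \<xi>) r b \<in> carrier_mat r r" for \<xi>
      by (simp add: mat_delete_def)
    fix i' j' assume ij: "i' < r" "j' < r"
    let ?j = "if j' < b then j' else Suc j'"
    have "mat_delete (?N \<xi>) r b $$ (i', j') = hpoly_eval k (A (f i') (g ?j)) \<xi>" for \<xi>
      using ij f g unfolding mat_delete_def by auto
    then show "(\<lambda>\<xi>. mat_delete (?N \<xi>) r b $$ (i', j')) \<in> hpolys k"
      by (intro hpolysI)
  qed
  have "(\<lambda>\<xi>. if g b = i then cofactor (?N \<xi>) r b else 0) \<in> hpolys (r * k)" for b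
  proof (cases "g b = i")
    case True
    have "(\<lambda>\<xi>. complex_of_real ((-1) ^ (r + b)) * det (mat_delete (?N \<xi>) r b)) \<in> hpolys (r * k)"
      by (rule hpolys_scale[OF minor])
    then show ?thesis using True by (simp add: cofactor_def)
  qed (simp add: hpolys_zero)
  then have "(\<lambda>\<xi>. \<Sum>b<Suc r. if g b = i then cofactor (?N \<xi>) r b else 0) \<in> hpolys (r * k)"
    by (intro hpolys_sum) auto
  then show ?thesis using i by (simp add: cofactor_vec_def)
qed

lemma cofactor_symbol_exists:
  fixes A :: "nat \<Rightarrow> nat \<Rightarrow> ('d::finite \<Rightarrow> nat) \<Rightarrow> real"
  obtains p B where "\<And>\<xi>. set (cols (symbolC n p (r * k) B \<xi>)) =
    {cofactor_vec (symbolC m n k A \<xi>) r f g | f g. (\<forall>a<r. f a < m) \<and> (\<forall>b<Suc r. g b < n)}"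
proof -
  define I where "I = ({..<r} \<rightarrow>\<^sub>E {..<m}) \<times> ({..<Suc r} \<rightarrow>\<^sub>E {..<n})"
  obtain L where L: "set L = I"
    using finite_list[of I] unfolding I_def by (auto intro: finite_PiE)
  define p where "p = length L"
  define cv where "cv \<xi> c = cofactor_vec (symbolC m n k A \<xi>) r (fst (L ! c)) (snd (L ! c))" for \<xi> c
  have L_range: "(\<forall>a<r. fst (L ! c) a < m) \<and> (\<forall>b<Suc r. snd (L ! c) b < n)" if "c < p" for c
    using nth_mem[of c L] that L unfolding p_def I_def by (auto simp: PiE_iff)
  have "(\<lambda>\<xi>. cv \<xi> c $ i) \<in> hpolys (r * k)" if "i < n" "c < p" for i c
    unfolding cv_def using L_range[OF that(2)] that(1) by (intro hpolys_cofactor_vec_index) auto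
  then obtain B where B: "\<And>\<xi>. symbolC n p (r * k) B \<xi> = mat n p (\<lambda>(i, c). cv \<xi> c $ i)"
    using symbolC_of_hpolys[of n p "\<lambda>i c \<xi>. cv \<xi> c $ i" "r * k"] by blast
  have col_B: "col (symbolC n p (r * k) B \<xi>) c = cv \<xi> c" if "c < p" for \<xi> c
    using that unfolding B cv_def by (intro eq_vecI) auto
  show thesis
  proof (rule that, intro equalityI subsetI)
    fix \<xi> v assume "v \<in> set (cols (symbolC n p (r * k) B \<xi>))"
    then obtain c where "c < p" "v = cv \<xi> c" by (auto simp: cols_def col_B)
    then show "v \<in> {cofactor_vec (symbolC m n k A \<xi>) r f g | f g. (\<forall>a<r. f a < m) \<and> (\<forall>b<Suc r. g b < n)}"
      using L_range unfolding cv_def by blast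
  next
    fix \<xi> v assume "v \<in> {cofactor_vec (symbolC m n k A \<xi>) r f g | f g. (\<forall>a<r. f a < m) \<and> (\<forall>b<Suc r. g b < n)}"
    then obtain f g where fg: "\<forall>a<r. f a < m" "\<forall>b<Suc r. g b < n"
      and v: "v = cofactor_vec (symbolC m n k A \<xi>) r f g" by blast
    have "(restrict f {..<r}, restrict g {..<Suc r}) \<in> set L"
      using fg unfolding L I_def by auto
    then obtain c where c: "c < p" "L ! c = (restrict f {..<r}, restrict g {..<Suc r})"
      unfolding p_def by (auto simp: in_set_conv_nth)
    have "v = cv \<xi> c" unfolding v cv_def c(2) by (rule cofactor_vec_cong) auto
    then show "v \<in> set (cols (symbolC n p (r * k) B \<xi>))"
      using c(1) col_B[of c \<xi>, symmetric] by (auto simp: cols_def)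
  qed
qed

lemma kernel_symbol_exists:
  fixes A :: "nat \<Rightarrow> nat \<Rightarrow> ('d::finite \<Rightarrow> nat) \<Rightarrow> real"
  assumes minors: "\<And>\<xi> f g. (\<forall>a<Suc r. f a < m) \<Longrightarrow> (\<forall>b<Suc r. g b < n) \<Longrightarrow>
    det (minor_mat (symbolC m n k A \<xi>) (Suc r) f g) = 0"
  obtains p B where "\<And>\<xi>. symbolC m n k A \<xi> * symbolC n p (r * k) B \<xi> = 0\<^sub>m m p"
    and "\<And>\<xi>. vec_space.rank m (symbolC m n k A \<xi>) = r \<Longrightarrow>
      mat_image (symbolC n p (r * k) B \<xi>) = mat_kernel (symbolC m n k A \<xi>)"
proof -
  obtain p B where cols_B: "\<And>\<xi>. set (cols (symbolC n p (r * k) B \<xi>)) =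
    {cofactor_vec (symbolC m n k A \<xi>) r f g | f g. (\<forall>a<r. f a < m) \<and> (\<forall>b<Suc r. g b < n)}"
    by (rule cofactor_symbol_exists[where m = m and n = n and k = k and r = r and A = A]) blast
  have "set (cols (symbolC n p (r * k) B \<xi>)) \<subseteq> mat_kernel (symbolC m n k A \<xi>)" for \<xi>
    unfolding cols_B using minors
    by (auto intro!: cofactor_vec_in_kernel[OF symbolC_carrier] simp: less_Suc_eq)
  then have product: "symbolC m n k A \<xi> * symbolC n p (r * k) B \<xi> = 0\<^sub>m m p" for \<xi>
    by (rule mult_eq_0_if_cols_in_kernel[OF symbolC_carrier symbolC_carrier])
  have "mat_image (symbolC n p (r * k) B \<xi>) = mat_kernel (symbolC m n k A \<xi>)"
    if rank: "vec_space.rank m (symbolC m n k A \<xi>) = r" for \<xi>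
  proof
    show "mat_image (symbolC n p (r * k) B \<xi>) \<subseteq> mat_kernel (symbolC m n k A \<xi>)"
      by (rule mat_image_subset_kernel_if_mult_0[OF symbolC_carrier symbolC_carrier product])
    obtain f g where "maximal_minor (symbolC m n k A \<xi>) m n (vec_space.rank m (symbolC m n k A \<xi>)) f g"
      by (rule maximal_minor_exists[OF symbolC_carrier])
    then interpret maximal_minor "symbolC m n k A \<xi>" m n r f g unfolding rank .
    have "kernel_vec j \<in> set (cols (symbolC n p (r * k) B \<xi>))" if "j \<in> free_cols" for j
    proof -
      have "\<forall>b<Suc r. (g(r := j)) b < n" using that cols_bound by (auto simp: free_cols_def less_Suc_eq)
      then show ?thesis unfolding cols_B kernel_vec_def using rows_bound by blast
    qed
    then have "kernel_vec ` free_cols \<subseteq> set (cols (symbolC n p (r * k) B \<xi>))" by blast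
    then have "mat_kernel (symbolC m n k A \<xi>) \<subseteq>
        LinearCombinations.module.span class_ring (module_vec TYPE(complex) n) (set (cols (symbolC n p (r * k) B \<xi>)))"
      using kernel_subset_span_kernel_vecs module.span_is_monotone[OF vec_module] by blast
    then show "mat_kernel (symbolC m n k A \<xi>) \<subseteq> mat_image (symbolC n p (r * k) B \<xi>)"
      using vec_space.mat_image_eq_span_cols[OF symbolC_carrier] by blast
  qed
  with product show thesis by (rule that)
qed

lemma cokernel_symbol_exists:
  fixes A :: "nat \<Rightarrow> nat \<Rightarrow> ('d::finite \<Rightarrow> nat) \<Rightarrow> real"
  assumes minors: "\<And>\<xi> f g. (\<forall>a<Suc r. f a < m) \<Longrightarrow> (\<forall>b<Suc r. g b < n) \<Longrightarrow>
    det (minor_mat (symbolC m n k A \<xi>) (Suc r) f g) = 0"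
  obtains q Q where "\<And>\<xi>. symbolC q m (r * k) Q \<xi> * symbolC m n k A \<xi> = 0\<^sub>m q n"
    and "\<And>\<xi>. vec_space.rank m (symbolC m n k A \<xi>) = r \<Longrightarrow>
      mat_image (symbolC m n k A \<xi>) = mat_kernel (symbolC q m (r * k) Q \<xi>)"
proof -
  define AT where "AT i j = A j i" for i j
  have AT: "symbolC n m k AT \<xi> = transpose_mat (symbolC m n k A \<xi>)" for \<xi>
    unfolding AT_def by (rule symbolC_transpose)
  have "det (minor_mat (symbolC n m k AT \<xi>) (Suc r) f g) = 0"
    if "\<forall>a<Suc r. f a < n" "\<forall>b<Suc r. g b < m" for \<xi> f g
    using minors[OF that(2,1), of \<xi>] det_minor_mat_transpose[OF symbolC_carrier[of m n k A \<xi>] that(2,1)]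
    by (simp add: AT)
  then obtain q QT where ATQT: "\<And>\<xi>. symbolC n m k AT \<xi> * symbolC m q (r * k) QT \<xi> = 0\<^sub>m n q"
    and exact_QT: "\<And>\<xi>. vec_space.rank n (symbolC n m k AT \<xi>) = r \<Longrightarrow>
      mat_image (symbolC m q (r * k) QT \<xi>) = mat_kernel (symbolC n m k AT \<xi>)"
    by (rule kernel_symbol_exists) blast+
  define Q where "Q i j = QT j i" for i j
  have QT: "symbolC q m (r * k) Q \<xi> = transpose_mat (symbolC m q (r * k) QT \<xi>)" for \<xi>
    unfolding Q_def by (rule symbolC_transpose)
  have QA: "symbolC q m (r * k) Q \<xi> * symbolC m n k A \<xi> = 0\<^sub>m q n" for \<xi>
  proof -
    have "symbolC q m (r * k) Q \<xi> * symbolC m n k A \<xi>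
        = transpose_mat (symbolC m q (r * k) QT \<xi>) * transpose_mat (symbolC n m k AT \<xi>)"
      by (simp add: QT AT)
    also have "\<dots> = transpose_mat (symbolC n m k AT \<xi> * symbolC m q (r * k) QT \<xi>)"
      by (rule transpose_mult[symmetric]) auto
    finally show ?thesis by (simp add: ATQT)
  qed
  have "mat_image (symbolC m n k A \<xi>) = mat_kernel (symbolC q m (r * k) Q \<xi>)"
    if rank: "vec_space.rank m (symbolC m n k A \<xi>) = r" for \<xi>
  proof (rule mat_image_eq_kernel_by_duality[OF symbolC_carrier symbolC_carrier QA])
    have "vec_space.rank n (symbolC n m k AT \<xi>) = r"
      using rank rank_transpose[OF symbolC_carrier[of m n k A \<xi>]] by (simp add: AT)
    then have "mat_image (symbolC m q (r * k) QT \<xi>) = mat_kernel (symbolC n m k AT \<xi>)"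
      by (rule exact_QT)
    then show "mat_kernel (transpose_mat (symbolC m n k A \<xi>))
        \<subseteq> mat_image (transpose_mat (symbolC q m (r * k) Q \<xi>))"
      by (simp add: AT QT)
  qed
  with QA show thesis by (rule that)
qed

lemma minors_vanish_if_constant_rank:
  fixes A :: "nat \<Rightarrow> nat \<Rightarrow> ('d::finite \<Rightarrow> nat) \<Rightarrow> real"
  assumes rank: "\<And>\<xi>. (\<exists>l. \<xi> l \<noteq> 0) \<Longrightarrow> vec_space.rank m (symbolC m n k A \<xi>) = r"
    and f: "\<forall>a<Suc r. f a < m" and g: "\<forall>b<Suc r. g b < n"
  shows "det (minor_mat (symbolC m n k A \<xi>) (Suc r) f g) = 0"
proof -
  have nonzero: "det (minor_mat (symbolC m n k A \<eta>) (Suc r) f g) = 0" if "\<exists>l. \<eta> l \<noteq> 0" for \<eta>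
  proof (rule ccontr)
    assume "det (minor_mat (symbolC m n k A \<eta>) (Suc r) f g) \<noteq> 0"
    then have "Suc r \<le> vec_space.rank m (symbolC m n k A \<eta>)"
      by (rule vec_space.minor_le_rank[OF symbolC_carrier f g])
    then show False using rank[OF that] by simp
  qed
  show ?thesis
  proof (cases "\<exists>l. \<xi> l \<noteq> 0")
    case True
    then show ?thesis by (rule nonzero)
  next
    case False
    then have \<xi>: "\<xi> = (\<lambda>_. 0)" by auto
    show ?thesis
    proof (cases "k = 0")
      case True
      then show ?thesis
        using nonzero[of "\<lambda>_. 1"] symbolC_degree_0[of m n A \<xi> "\<lambda>_. 1"] by simp
    next
      case False
      then have "minor_mat (symbolC m n k A \<xi>) (Suc r) f g = 0\<^sub>m (Suc r) (Suc r)"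
        using f g by (intro eq_matI) (auto simp: \<xi> hpoly_eval_at_0)
      then show ?thesis by simp
    qed
  qed
qed

lemma exact_complex_if_constant_rank:
  fixes A :: "nat \<Rightarrow> nat \<Rightarrow> ('d::finite \<Rightarrow> nat) \<Rightarrow> real"
  assumes rank: "\<forall>\<xi>::'d \<Rightarrow> complex. (\<exists>l. \<xi> l \<noteq> 0) \<longrightarrow> crank (symbolC m n k A \<xi>) = r"
  shows "\<exists>(p::nat) (q::nat) (kB::nat) (kQ::nat)
        (B :: nat \<Rightarrow> nat \<Rightarrow> ('d \<Rightarrow> nat) \<Rightarrow> real) (Q :: nat \<Rightarrow> nat \<Rightarrow> ('d \<Rightarrow> nat) \<Rightarrow> real).
       (\<forall>\<xi>::'d \<Rightarrow> real.
          symbolC m n k A (\<lambda>l. complex_of_real (\<xi> l)) * symbolC n p kB B (\<lambda>l. complex_of_real (\<xi> l)) = 0\<^sub>m m p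
        \<and> symbolC q m kQ Q (\<lambda>l. complex_of_real (\<xi> l)) * symbolC m n k A (\<lambda>l. complex_of_real (\<xi> l)) = 0\<^sub>m q n)
     \<and> (\<forall>\<xi>::'d \<Rightarrow> complex. (\<exists>l. \<xi> l \<noteq> 0) \<longrightarrow>
          mat_image (symbolC n p kB B \<xi>) = mat_kernel (symbolC m n k A \<xi>)
        \<and> mat_image (symbolC m n k A \<xi>) = mat_kernel (symbolC q m kQ Q \<xi>))"
proof -
  have rank_A: "vec_space.rank m (symbolC m n k A \<xi>) = r" if "\<exists>l. \<xi> l \<noteq> 0" for \<xi>
    using rank that by simp
  note minors = minors_vanish_if_constant_rank[OF rank_A]
  obtain p B where AB: "\<And>\<xi>. symbolC m n k A \<xi> * symbolC n p (r * k) B \<xi> = 0\<^sub>m m p"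
    and exact_B: "\<And>\<xi>. vec_space.rank m (symbolC m n k A \<xi>) = r \<Longrightarrow>
      mat_image (symbolC n p (r * k) B \<xi>) = mat_kernel (symbolC m n k A \<xi>)"
    by (rule kernel_symbol_exists[OF minors]) blast+
  obtain q Q where QA: "\<And>\<xi>. symbolC q m (r * k) Q \<xi> * symbolC m n k A \<xi> = 0\<^sub>m q n"
    and exact_Q: "\<And>\<xi>. vec_space.rank m (symbolC m n k A \<xi>) = r \<Longrightarrow>
      mat_image (symbolC m n k A \<xi>) = mat_kernel (symbolC q m (r * k) Q \<xi>)"
    by (rule cokernel_symbol_exists[OF minors]) blast+
  show ?thesis
    by (rule exI[of _ p], rule exI[of _ q], rule exI[of _ "r * k"], rule exI[of _ "r * k"],
        rule exI[of _ B], rule exI[of _ Q]) (use AB QA exact_B exact_Q rank_A in blast)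
qed

definition segment_fun :: "('d \<Rightarrow> complex) \<Rightarrow> ('d \<Rightarrow> complex) \<Rightarrow> real \<Rightarrow> 'd \<Rightarrow> complex" where
  "segment_fun \<xi> \<eta> t l = (1 - complex_of_real t) * \<xi> l + complex_of_real t * \<eta> l"

lemma crank_eq_if_segment_avoids_0:
  fixes A :: "nat \<Rightarrow> nat \<Rightarrow> ('d::finite \<Rightarrow> nat) \<Rightarrow> real"
  assumes exact: "\<forall>\<xi>::'d \<Rightarrow> complex. (\<exists>l. \<xi> l \<noteq> 0) \<longrightarrow>
      mat_image (symbolC n p kB B \<xi>) = mat_kernel (symbolC m n k A \<xi>)"
    and avoids_0: "\<forall>t\<in>{0..1}. \<exists>l. segment_fun \<xi> \<eta> t l \<noteq> 0"
  shows "crank (symbolC m n k A \<xi>) = crank (symbolC m n k A \<eta>)"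
proof -
  have segment: "continuous (at t within S) (\<lambda>t. segment_fun \<xi> \<eta> t l)" for t S l
    unfolding segment_fun_def by (intro continuous_intros)
  have "vec_space.rank m (symbolC m n k A (segment_fun \<xi> \<eta> 0))
      = vec_space.rank m (symbolC m n k A (segment_fun \<xi> \<eta> 1))"
    by (rule rank_constant_if_image_eq_kernel_on_connected[where S = "{0..1}"
          and B = "\<lambda>t. symbolC n p kB B (segment_fun \<xi> \<eta> t)"])
      (use exact avoids_0 in \<open>auto intro!: continuous_intros segment\<close>)
  moreover have "segment_fun \<xi> \<eta> 0 = \<xi>" "segment_fun \<xi> \<eta> 1 = \<eta>"
    by (auto simp: segment_fun_def)
  ultimately show ?thesis by simp
qed

text \<open>If the segment from \<open>\<xi>\<close> to the constant \<open>1\<close> passes through \<open>0\<close>, then \<open>\<xi>\<close> is real, and the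
  detour through the constant \<open>\<i>\<close> avoids \<open>0\<close>.\<close>

lemma segment_to_one_avoids_0_or_via_i:
  fixes \<xi> :: "'d \<Rightarrow> complex"
  assumes l0: "\<xi> l0 \<noteq> 0"
  shows "(\<forall>t\<in>{0..1}. \<exists>l. segment_fun \<xi> (\<lambda>_. 1) t l \<noteq> 0)
    \<or> (\<forall>t\<in>{0..1}. \<exists>l. segment_fun \<xi> (\<lambda>_. \<i>) t l \<noteq> 0)
      \<and> (\<forall>t\<in>{0..1}. \<exists>l. segment_fun (\<lambda>_::'d. \<i>) (\<lambda>_. 1) t l \<noteq> 0)"
proof (rule disjCI[THEN disj_commute[THEN iffD1]])
  assume "\<not> (\<forall>t\<in>{0..1}. \<exists>l. segment_fun \<xi> (\<lambda>_. 1) t l \<noteq> 0)"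
  then obtain t0 where "\<forall>l. segment_fun \<xi> (\<lambda>_. 1) t0 l = 0" by blast
  then have t0: "(1 - complex_of_real t0) * \<xi> l0 + complex_of_real t0 = 0"
    unfolding segment_fun_def by simp
  then have "t0 \<noteq> 1" by auto
  moreover have "(1 - t0) * Im (\<xi> l0) = 0"
    using arg_cong[OF t0, of Im] by simp
  ultimately have Im: "Im (\<xi> l0) = 0" by simp
  have "segment_fun \<xi> (\<lambda>_. \<i>) s l0 \<noteq> 0" for s
  proof
    assume s: "segment_fun \<xi> (\<lambda>_. \<i>) s l0 = 0"
    have "Im (segment_fun \<xi> (\<lambda>_. \<i>) s l0) = s" using Im by (simp add: segment_fun_def)
    then have "s = 0" using s by simp
    with s l0 show False by (simp add: segment_fun_def)
  qed
  moreover have "segment_fun (\<lambda>_. \<i>) (\<lambda>_. 1) s l0 \<noteq> 0" for s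
    by (simp add: segment_fun_def complex_eq_iff)
  ultimately show "(\<forall>t\<in>{0..1}. \<exists>l. segment_fun \<xi> (\<lambda>_. \<i>) t l \<noteq> 0)
      \<and> (\<forall>t\<in>{0..1}. \<exists>l. segment_fun (\<lambda>_::'d. \<i>) (\<lambda>_. 1) t l \<noteq> 0)"
    by blast
qed

lemma constant_rank_if_exact:
  fixes A :: "nat \<Rightarrow> nat \<Rightarrow> ('d::finite \<Rightarrow> nat) \<Rightarrow> real"
  assumes exact: "\<forall>\<xi>::'d \<Rightarrow> complex. (\<exists>l. \<xi> l \<noteq> 0) \<longrightarrow>
      mat_image (symbolC n p kB B \<xi>) = mat_kernel (symbolC m n k A \<xi>)"
  shows "\<exists>r. \<forall>\<xi>::'d \<Rightarrow> complex. (\<exists>l. \<xi> l \<noteq> 0) \<longrightarrow> crank (symbolC m n k A \<xi>) = r"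
proof (intro exI allI impI)
  fix \<xi> :: "'d \<Rightarrow> complex" assume "\<exists>l. \<xi> l \<noteq> 0"
  then obtain l0 where "\<xi> l0 \<noteq> 0" by blast
  from segment_to_one_avoids_0_or_via_i[of \<xi> l0, OF this]
  consider "\<forall>t\<in>{0..1}. \<exists>l. segment_fun \<xi> (\<lambda>_. 1) t l \<noteq> 0"
    | "\<forall>t\<in>{0..1}. \<exists>l. segment_fun \<xi> (\<lambda>_. \<i>) t l \<noteq> 0"
      "\<forall>t\<in>{0..1}. \<exists>l. segment_fun (\<lambda>_::'d. \<i>) (\<lambda>_. 1) t l \<noteq> 0"
    by blast
  then show "crank (symbolC m n k A \<xi>) = crank (symbolC m n k A (\<lambda>_. 1))"
  proof cases
    case 1
    then show ?thesis by (rule crank_eq_if_segment_avoids_0[OF exact])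
  next
    case 2
    have "crank (symbolC m n k A \<xi>) = crank (symbolC m n k A (\<lambda>_. \<i>))"
      using 2(1) by (rule crank_eq_if_segment_avoids_0[OF exact])
    also have "\<dots> = crank (symbolC m n k A (\<lambda>_. 1))"
      using 2(2) by (rule crank_eq_if_segment_avoids_0[OF exact])
    finally show ?thesis .
  qed
qed

theorem theorem2p6:
  fixes A :: "nat \<Rightarrow> nat \<Rightarrow> ('d::finite \<Rightarrow> nat) \<Rightarrow> real"
    and n m k :: nat
  shows "(\<exists>r. \<forall>\<xi>::'d \<Rightarrow> complex. (\<exists>l. \<xi> l \<noteq> 0) \<longrightarrow> crank (symbolC m n k A \<xi>) = r)
    \<longleftrightarrow>
    (\<exists>(p::nat) (q::nat) (kB::nat) (kQ::nat)
        (B :: nat \<Rightarrow> nat \<Rightarrow> ('d \<Rightarrow> nat) \<Rightarrow> real) (Q :: nat \<Rightarrow> nat \<Rightarrow> ('d \<Rightarrow> nat) \<Rightarrow> real).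
       (\<forall>\<xi>::'d \<Rightarrow> real.
          symbolC m n k A (\<lambda>l. complex_of_real (\<xi> l)) * symbolC n p kB B (\<lambda>l. complex_of_real (\<xi> l)) = 0\<^sub>m m p
        \<and> symbolC q m kQ Q (\<lambda>l. complex_of_real (\<xi> l)) * symbolC m n k A (\<lambda>l. complex_of_real (\<xi> l)) = 0\<^sub>m q n)
     \<and> (\<forall>\<xi>::'d \<Rightarrow> complex. (\<exists>l. \<xi> l \<noteq> 0) \<longrightarrow>
          mat_image (symbolC n p kB B \<xi>) = mat_kernel (symbolC m n k A \<xi>)
        \<and> mat_image (symbolC m n k A \<xi>) = mat_kernel (symbolC q m kQ Q \<xi>)))"
  by (rule iffI) (erule exE, erule exact_complex_if_constant_rank,
      elim exE conjE, simp only: imp_conjR all_conj_distrib, elim conjE, erule constant_rank_if_exact)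

end
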